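(* Let $m\ge o\ge 0$ and $n\ge 0$ be integers with $m+n+o\ge 4$ such that the graph $T_n\vee(K_m+K_o)$ is connected and is neither a complete graph nor a complete bipartite graph. Let the vertices of $K_m$, $T_n$, $K_o$ carry the indeterminates $x_1,\dots,x_m$, $y_1,\dots,y_n$, $z_1,\dots,z_o$ respectively. Then the third critical ideal $I_3=I_3(T_n\vee(K_m+K_o),\{X,Y,Z\})$ is: - $\langle 2, x_1+1,\dots,x_m+1, y_1,\dots,y_n, z_1+1,\dots,z_o+1\rangle$ if $m,n,o\ge 2$; - $\langle x_1+1,\dots,x_m+1, y_1+2, z_1+1,\dots,z_o+1\rangle$ if $m\ge 2$, $n=1$, $o\ge 2$; - $\langle x_1+1,\dots,x_m+1, y_1,\dots,y_n, z_1-1\rangle$ if $m\ge 2$, $n\ge 2$, $o=1$; - $\langle x_1+z_1, y_1,\dots,y_n\rangle$ if $m=1$, $n\ge 3$, $o=1$; - $\langle x_1+z_1,\ y_1+y_2,\ y_2z_1\rangle$ if $m=1$, $n=2$, $o=1$; - $\langle x_1+1,\dots,x_m+1,\ z_1y_1+z_1-1\rangle$ if $m\ge 2$, $n=1$, $o=1$; - $\langle x_1+1,\dots,x_m+1, y_1,\dots,y_n\rangle$ if $m\ge 3$, $n\ge 3$, $o=0$; - $\langle x_1+x_2+2, y_1,\dots,y_n\rangle$ if $m=2$, $n\ge 3$, $o=0$; - $\langle x_1+1,\dots,x_m+1,\ y_1y_2+y_1+y_2\rangle$ if $m\ge 3$, $n=2$, $o=0$; - $\langle x_1+x_2+2,\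 x_2y_1+y_1,\ x_2y_2+y_2,\ y_1y_2+y_1+y_2\rangle$ if $m=2$, $n=2$, $o=0$.
   Context: For a finite graph $G$ with an indeterminate $x_u$ for each vertex $u$, the generalized Laplacian matrix $L(G,X_G)$ is the matrix indexed by $V(G)$ with $(u,u)$-entry $x_u$ and $(u,v)$-entry $-m_{uv}$ for $u\ne v$, $m_{uv}$ being the number of edges between $u$ and $v$. The third critical ideal $I_3(G,X_G)$ is the ideal of $\mathbb{Z}[X_G]$ generated by all $3\times 3$ minors of $L(G,X_G)$. $T_n$ is the edgeless graph on $n$ vertices, $K_m$ the complete graph on $m$ vertices ($K_0$ is empty), $+$ denotes disjoint union and $G\vee H$ the join (disjoint union plus all edges between $G$ and $H$). *)

theory Defs
  imports "HOL-Library.Poly_Mapping"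
begin

text \<open>Multivariate polynomials over the integers with indeterminates indexed by 'v:
  a polynomial is a finitely supported map from monomials (exponent vectors)
  to integer coefficients.\<close>
type_synonym 'v zpoly = "('v \<Rightarrow>\<^sub>0 nat) \<Rightarrow>\<^sub>0 int"

definition Var :: "'v \<Rightarrow> 'v zpoly" where
  "Var v = Poly_Mapping.single (Poly_Mapping.single v 1) 1"

definition ideal_gen :: "'a::comm_ring_1 set \<Rightarrow> 'a set" where
  "ideal_gen S = {x. \<exists>F c. finite F \<and> F \<subseteq> S \<and> x = (\<Sum>g\<in>F. c g * g)}"

definition gen_laplacian :: "('v \<Rightarrow> 'v \<Rightarrow> nat) \<Rightarrow> 'v \<Rightarrow> 'v \<Rightarrow> 'v zpoly" where
  "gen_laplacian mult u v = (if u = v then Var u else - of_nat (mult u v))"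

definition det3 :: "('r \<Rightarrow> 'c \<Rightarrow> 'a::comm_ring_1) \<Rightarrow> 'r \<Rightarrow> 'r \<Rightarrow> 'r \<Rightarrow> 'c \<Rightarrow> 'c \<Rightarrow> 'c \<Rightarrow> 'a" where
  "det3 M r1 r2 r3 c1 c2 c3 =
     M r1 c1 * M r2 c2 * M r3 c3 + M r1 c2 * M r2 c3 * M r3 c1 + M r1 c3 * M r2 c1 * M r3 c2
   - M r1 c3 * M r2 c2 * M r3 c1 - M r1 c1 * M r2 c3 * M r3 c2 - M r1 c2 * M r2 c1 * M r3 c3"

definition critical_ideal3 :: "'v set \<Rightarrow> ('v \<Rightarrow> 'v \<Rightarrow> nat) \<Rightarrow> 'v zpoly set" where
  "critical_ideal3 V mult = ideal_gen
     {det3 (gen_laplacian mult) a b c d e f | a b c d e f.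
        a \<in> V \<and> b \<in> V \<and> c \<in> V \<and> distinct [a, b, c] \<and>
        d \<in> V \<and> e \<in> V \<and> f \<in> V \<and> distinct [d, e, f]}"

definition graph_connected :: "'v set \<Rightarrow> ('v \<Rightarrow> 'v \<Rightarrow> bool) \<Rightarrow> bool" where
  "graph_connected V E = (\<forall>u\<in>V. \<forall>v\<in>V. (u, v) \<in> {(a, b). a \<in> V \<and> b \<in> V \<and> E a b}\<^sup>*)"

definition graph_complete :: "'v set \<Rightarrow> ('v \<Rightarrow> 'v \<Rightarrow> bool) \<Rightarrow> bool" where
  "graph_complete V E = (\<forall>u\<in>V. \<forall>v\<in>V. u \<noteq> v \<longrightarrow> E u v)"

definition graph_complete_bipartite :: "'v set \<Rightarrow> ('v \<Rightarrow> 'v \<Rightarrow> bool) \<Rightarrow> bool" where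
  "graph_complete_bipartite V E = (\<exists>A B. A \<union> B = V \<and> A \<inter> B = {} \<and> A \<noteq> {} \<and> B \<noteq> {} \<and>
      (\<forall>u\<in>A. \<forall>v\<in>B. E u v \<and> E v u) \<and>
      (\<forall>u\<in>A. \<forall>v\<in>A. \<not> E u v) \<and> (\<forall>u\<in>B. \<forall>v\<in>B. \<not> E u v))"

text \<open>The graph T_n \<or> (K_m + K_o): vertices VX i (K_m), VY j (T_n), VZ k (K_o), indices from 1.\<close>
datatype vtx = VX nat | VY nat | VZ nat

definition tkk_vertices :: "nat \<Rightarrow> nat \<Rightarrow> nat \<Rightarrow> vtx set" where
  "tkk_vertices m n q = VX ` {1..m} \<union> VY ` {1..n} \<union> VZ ` {1..q}"

fun tkk_adj :: "vtx \<Rightarrow> vtx \<Rightarrow> bool" where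
  "tkk_adj (VX i) (VX j) = (i \<noteq> j)"
| "tkk_adj (VZ i) (VZ j) = (i \<noteq> j)"
| "tkk_adj (VY _) (VX _) = True"
| "tkk_adj (VX _) (VY _) = True"
| "tkk_adj (VY _) (VZ _) = True"
| "tkk_adj (VZ _) (VY _) = True"
| "tkk_adj (VY _) (VY _) = False"
| "tkk_adj (VX _) (VZ _) = False"
| "tkk_adj (VZ _) (VX _) = False"

definition tkk_mult :: "vtx \<Rightarrow> vtx \<Rightarrow> nat" where
  "tkk_mult u v = (if tkk_adj u v then 1 else 0)"

end

theory Submission
  imports Defs HOL.Modules
begin

text \<open>Each generator of the claimed ideal \<open>J\<close> is a 3x3 minor of the generalized Laplacian \<open>L\<close>,
  or a short combination of such minors. Conversely, modulo \<open>J\<close> the vertices fall into at most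
  three classes with identical rows and columns, so \<open>L\<close> is congruent to a blow-up of a 3x3
  matrix \<open>B\<close> with \<open>det B \<in> J\<close>; every 3x3 minor of such a blow-up is \<open>0\<close> or \<open>\<plusminus>det B\<close>.
  The only exception is \<open>T\<^sub>2 \<or> K\<^sub>2\<close> on four vertices, whose sixteen minors are written
  explicitly in terms of the generators.\<close>

text \<open>Ideals are the submodules of a commutative ring regarded as a module over itself; this
  makes \<open>ideal_gen\<close> a span and gives access to the library on spans.\<close>

interpretation ring_module: module "(*) :: 'a::comm_ring_1 \<Rightarrow> 'a \<Rightarrow> 'a"
  by standard (simp_all add: algebra_simps)

declare ring_module.scale_scale [simp del] \<comment> \<open>it would loop against \<open>mult.assoc\<close>\<close>

abbreviation ideal :: "'a::comm_ring_1 set \<Rightarrow> bool" where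
  "ideal \<equiv> ring_module.subspace"

lemmas ideal_closed =
  ring_module.subspace_0 ring_module.subspace_add ring_module.subspace_diff
  ring_module.subspace_neg ring_module.subspace_scale

lemma ideal_gen_eq_span: "ideal_gen S = ring_module.span S"
  by (auto simp: ideal_gen_def ring_module.span_explicit)

lemma ideal_ideal_gen: "ideal (ideal_gen S)"
  by (simp add: ideal_gen_eq_span)

lemma zero_mem_ideal_gen [simp]: "0 \<in> ideal_gen S"
  by (simp add: ideal_gen_eq_span ring_module.span_zero)

lemma ideal_gen_base: "x \<in> S \<Longrightarrow> x \<in> ideal_gen S"
  by (simp add: ideal_gen_eq_span ring_module.span_base)

lemma ideal_gen_subset_iff:
  assumes "ideal J"
  shows "ideal_gen S \<subseteq> J \<longleftrightarrow> S \<subseteq> J"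
proof
  show "S \<subseteq> J" if "ideal_gen S \<subseteq> J"
    using that ring_module.span_superset[of S] by (simp add: ideal_gen_eq_span)
  show "ideal_gen S \<subseteq> J" if "S \<subseteq> J"
    using that assms by (simp add: ideal_gen_eq_span ring_module.span_minimal)
qed

lemma det3_transpose: "det3 M a b c d e f = det3 (\<lambda>i j. M j i) d e f a b c"
  unfolding det3_def by (simp add: algebra_simps)

lemma det3_symmetric:
  assumes "\<And>i j. M j i = M i j"
  shows "det3 M a b c d e f = det3 M d e f a b c"
  using det3_transpose[of M a b c d e f] assms by simp

lemma det3_rows_among:
  assumes "a \<in> {p1, p2, p3}" "b \<in> {p1, p2, p3}" "c \<in> {p1, p2, p3}"
  shows "det3 M a b c d e f \<in> {det3 M p1 p2 p3 d e f, - det3 M p1 p2 p3 d e f, 0}"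
  using assms unfolding det3_def by (elim insertE emptyE) (simp_all add: algebra_simps)

lemma det3_cols_among:
  assumes "d \<in> {q1, q2, q3}" "e \<in> {q1, q2, q3}" "f \<in> {q1, q2, q3}"
  shows "det3 M a b c d e f \<in> {det3 M a b c q1 q2 q3, - det3 M a b c q1 q2 q3, 0}"
  using assms unfolding det3_def by (elim insertE emptyE) (simp_all add: algebra_simps)

lemma ideal_mem_if_signed:
  assumes "ideal J" "y \<in> J" "x \<in> {y, - y, 0}"
  shows "x \<in> J"
  using assms ideal_closed(1,4)[OF assms(1)] by auto

lemma det3_mem_if_among:
  assumes J: "ideal J"
    and rows: "a \<in> {p1, p2, p3}" "b \<in> {p1, p2, p3}" "c \<in> {p1, p2, p3}"
    and cols: "d \<in> {q1, q2, q3}" "e \<in> {q1, q2, q3}" "f \<in> {q1, q2, q3}"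
    and det: "det3 M p1 p2 p3 q1 q2 q3 \<in> J"
  shows "det3 M a b c d e f \<in> J"
proof -
  have "det3 M p1 p2 p3 d e f \<in> J"
    by (rule ideal_mem_if_signed[OF J det det3_cols_among[OF cols]])
  then show ?thesis
    by (rule ideal_mem_if_signed[OF J _ det3_rows_among[OF rows]])
qed

lemma prod3_congruent:
  assumes J: "ideal J" and "a - a' \<in> J" "b - b' \<in> J" "c - c' \<in> J"
  shows "a * b * c - a' * b' * c' \<in> J"
proof -
  have "a * b * c - a' * b' * c' = (b * c) * (a - a') + (a' * c) * (b - b') + (a' * b') * (c - c')"
    by (simp add: algebra_simps)
  then show ?thesis
    using assms by (auto intro!: ideal_closed)
qed

lemma det3_congruent:
  assumes J: "ideal J"
    and congr: "\<And>u v. u \<in> V \<Longrightarrow> v \<in> V \<Longrightarrow> M u v - N u v \<in> J"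
    and V: "a \<in> V" "b \<in> V" "c \<in> V" "d \<in> V" "e \<in> V" "f \<in> V"
  shows "det3 M a b c d e f - det3 N a b c d e f \<in> J"
proof -
  let ?D = "\<lambda>r1 c1 r2 c2 r3 c3. M r1 c1 * M r2 c2 * M r3 c3 - N r1 c1 * N r2 c2 * N r3 c3"
  have D: "?D r1 c1 r2 c2 r3 c3 \<in> J"
    if "r1 \<in> V" "c1 \<in> V" "r2 \<in> V" "c2 \<in> V" "r3 \<in> V" "c3 \<in> V" for r1 c1 r2 c2 r3 c3
    using that by (intro prod3_congruent[OF J] congr)
  have "det3 M a b c d e f - det3 N a b c d e f =
     ?D a d b e c f + ?D a e b f c d + ?D a f b d c e - ?D a f b e c d - ?D a d b f c e - ?D a e b d c f"
    unfolding det3_def by (simp add: algebra_simps)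
  also have "\<dots> \<in> J"
    using V by (intro ideal_closed(2,3)[OF J] D)
  finally show ?thesis .
qed

lemma det3_mem_critical_ideal3:
  assumes "a \<in> V" "b \<in> V" "c \<in> V" "distinct [a, b, c]"
    and "d \<in> V" "e \<in> V" "f \<in> V" "distinct [d, e, f]"
  shows "det3 (gen_laplacian mult) a b c d e f \<in> critical_ideal3 V mult"
  unfolding critical_ideal3_def by (rule ideal_gen_base) (use assms in blast)

lemma ideal_critical_ideal3: "ideal (critical_ideal3 V mult)"
  unfolding critical_ideal3_def by (rule ideal_ideal_gen)

lemma critical_ideal3_subsetI:
  assumes "ideal J"
    and "\<And>a b c d e f. a \<in> V \<Longrightarrow> b \<in> V \<Longrightarrow> c \<in> V \<Longrightarrow> d \<in> V \<Longrightarrow> e \<in> V \<Longrightarrow> f \<in> V \<Longrightarrow>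
           det3 (gen_laplacian mult) a b c d e f \<in> J"
  shows "critical_ideal3 V mult \<subseteq> J"
  unfolding critical_ideal3_def ideal_gen_subset_iff[OF assms(1)] using assms(2) by blast

lemma critical_ideal3_subset_by_blocks:
  assumes J: "ideal J"
    and congr: "\<And>u v. u \<in> V \<Longrightarrow> v \<in> V \<Longrightarrow> gen_laplacian mult u v - B (cls u) (cls v) \<in> J"
    and cls: "cls ` V \<subseteq> {i, j, k}"
    and det: "det3 B i j k i j k \<in> J"
  shows "critical_ideal3 V mult \<subseteq> J"
proof (rule critical_ideal3_subsetI[OF J])
  fix a b c d e f assume V: "a \<in> V" "b \<in> V" "c \<in> V" "d \<in> V" "e \<in> V" "f \<in> V"
  let ?N = "\<lambda>u v. B (cls u) (cls v)"
  have "det3 ?N a b c d e f = det3 B (cls a) (cls b) (cls c) (cls d) (cls e) (cls f)"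
    by (simp add: det3_def)
  also have "\<dots> \<in> J"
    using V cls by (intro det3_mem_if_among[OF J _ _ _ _ _ _ det]) auto
  finally have "det3 ?N a b c d e f \<in> J" .
  moreover have "det3 (gen_laplacian mult) a b c d e f - det3 ?N a b c d e f \<in> J"
    using congr V by (rule det3_congruent[OF J])
  ultimately show "det3 (gen_laplacian mult) a b c d e f \<in> J"
    using ideal_closed(2)[OF J] by force
qed

lemma critical_ideal3_subset_by_triples:
  assumes J: "ideal J"
    and cover: "\<And>a b c. a \<in> V \<Longrightarrow> b \<in> V \<Longrightarrow> c \<in> V \<Longrightarrow>
       \<exists>(p1, p2, p3) \<in> T. a \<in> {p1, p2, p3} \<and> b \<in> {p1, p2, p3} \<and> c \<in> {p1, p2, p3}"
    and minors: "\<And>p1 p2 p3 q1 q2 q3. (p1, p2, p3) \<in> T \<Longrightarrow> (q1, q2, q3) \<in> T \<Longrightarrow>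
       det3 (gen_laplacian mult) p1 p2 p3 q1 q2 q3 \<in> J"
  shows "critical_ideal3 V mult \<subseteq> J"
proof (rule critical_ideal3_subsetI[OF J])
  fix a b c d e f
  assume rows: "a \<in> V" "b \<in> V" "c \<in> V" and cols: "d \<in> V" "e \<in> V" "f \<in> V"
  obtain p1 p2 p3 where p: "(p1, p2, p3) \<in> T" "a \<in> {p1, p2, p3}" "b \<in> {p1, p2, p3}" "c \<in> {p1, p2, p3}"
    using cover[OF rows] by auto
  obtain q1 q2 q3 where q: "(q1, q2, q3) \<in> T" "d \<in> {q1, q2, q3}" "e \<in> {q1, q2, q3}" "f \<in> {q1, q2, q3}"
    using cover[OF cols] by auto
  show "det3 (gen_laplacian mult) a b c d e f \<in> J"
    by (rule det3_mem_if_among[OF J p(2-4) q(2-4) minors[OF p(1) q(1)]])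
qed

abbreviation tkk_laplacian :: "vtx \<Rightarrow> vtx \<Rightarrow> vtx zpoly" where
  "tkk_laplacian \<equiv> gen_laplacian tkk_mult"

abbreviation tkk_ideal3 :: "nat \<Rightarrow> nat \<Rightarrow> nat \<Rightarrow> vtx zpoly set" where
  "tkk_ideal3 m n q \<equiv> critical_ideal3 (tkk_vertices m n q) tkk_mult"

lemma tkk_laplacian_simps [simp]:
  "tkk_laplacian (VX i) (VX j) = (if i = j then Var (VX i) else -1)"
  "tkk_laplacian (VY i) (VY j) = (if i = j then Var (VY i) else 0)"
  "tkk_laplacian (VZ i) (VZ j) = (if i = j then Var (VZ i) else -1)"
  "tkk_laplacian (VX i) (VY j) = -1" "tkk_laplacian (VY j) (VX i) = -1"
  "tkk_laplacian (VZ i) (VY j) = -1" "tkk_laplacian (VY j) (VZ i) = -1"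
  "tkk_laplacian (VX i) (VZ j) = 0" "tkk_laplacian (VZ j) (VX i) = 0"
  by (auto simp: gen_laplacian_def tkk_mult_def)

lemma tkk_laplacian_sym: "tkk_laplacian v u = tkk_laplacian u v"
  by (cases u; cases v) auto

lemma mem_tkk_vertices [simp]:
  "VX i \<in> tkk_vertices m n q \<longleftrightarrow> i \<in> {1..m}"
  "VY i \<in> tkk_vertices m n q \<longleftrightarrow> i \<in> {1..n}"
  "VZ i \<in> tkk_vertices m n q \<longleftrightarrow> i \<in> {1..q}"
  by (auto simp: tkk_vertices_def)

lemma tkk_complete_bipartite:
  assumes "1 \<le> n"
  shows "graph_complete_bipartite (tkk_vertices 1 n 1) tkk_adj"
  unfolding graph_complete_bipartite_def
  by (rule exI[of _ "{VX 1, VZ 1}"], rule exI[of _ "VY ` {1..n}"])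
    (use assms in \<open>auto simp: tkk_vertices_def\<close>)

fun vtx_part :: "vtx \<Rightarrow> nat" where
  "vtx_part (VX _) = 0" | "vtx_part (VY _) = 1" | "vtx_part (VZ _) = 2"

lemma vtx_part_range: "vtx_part ` V \<subseteq> {0, 1, 2}"
proof (rule image_subsetI)
  show "vtx_part v \<in> {0, 1, 2}" for v
    by (cases v) auto
qed

lemma Var_VX_add_one_mem:
  assumes "i \<in> {1..m}" "2 \<le> m" "1 \<le> n" "1 \<le> q"
  shows "Var (VX i) + 1 \<in> tkk_ideal3 m n q"
proof -
  obtain j where j: "j \<in> {1, 2}" "j \<noteq> i"
    by (cases "i = 1") auto
  have "Var (VX i) + 1 = det3 tkk_laplacian (VX i) (VX j) (VY 1) (VX i) (VY 1) (VZ 1)"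
    using j by (simp add: det3_def algebra_simps)
  also have "\<dots> \<in> tkk_ideal3 m n q"
    using assms j by (intro det3_mem_critical_ideal3) auto
  finally show ?thesis .
qed

lemma Var_VX_add_one_mem':
  assumes "i \<in> {1..m}" "3 \<le> m" "2 \<le> n"
  shows "Var (VX i) + 1 \<in> tkk_ideal3 m n q"
proof -
  obtain j k where jk: "j \<in> {1, 2, 3}" "k \<in> {1, 2, 3}" "distinct [i, j, k]"
    by (rule that[of "if i = 1 then 2 else 1" "if i \<le> 2 then 3 else 2"]) auto
  have "Var (VX i) + 1 = det3 tkk_laplacian (VX i) (VX j) (VY 2) (VX i) (VY 1) (VX k)"
    using jk by (simp add: det3_def algebra_simps)
  also have "\<dots> \<in> tkk_ideal3 m n q"
    using assms jk by (intro det3_mem_critical_ideal3) auto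
  finally show ?thesis .
qed

lemma Var_VZ_add_one_mem:
  assumes "k \<in> {1..q}" "2 \<le> q" "1 \<le> n" "1 \<le> m"
  shows "Var (VZ k) + 1 \<in> tkk_ideal3 m n q"
proof -
  obtain j where j: "j \<in> {1, 2}" "j \<noteq> k"
    by (cases "k = 1") auto
  have "Var (VZ k) + 1 = det3 tkk_laplacian (VZ k) (VZ j) (VY 1) (VZ k) (VY 1) (VX 1)"
    using j by (simp add: det3_def algebra_simps)
  also have "\<dots> \<in> tkk_ideal3 m n q"
    using assms j by (intro det3_mem_critical_ideal3) auto
  finally show ?thesis .
qed

lemma Var_VY_mem:
  assumes "j \<in> {1..n}" "2 \<le> n" "2 \<le> m" "1 \<le> q"
  shows "Var (VY j) \<in> tkk_ideal3 m n q"
proof -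
  obtain b where b: "b \<in> {1, 2}" "b \<noteq> j"
    by (cases "j = 1") auto
  have "Var (VY j) = det3 tkk_laplacian (VY j) (VY b) (VX 1) (VY j) (VZ 1) (VX 2)"
    using b by (simp add: det3_def algebra_simps)
  also have "\<dots> \<in> tkk_ideal3 m n q"
    using assms b by (intro det3_mem_critical_ideal3) auto
  finally show ?thesis .
qed

lemma Var_VY_mem':
  assumes "j \<in> {1..n}" "3 \<le> n" "1 \<le> m"
  shows "Var (VY j) \<in> tkk_ideal3 m n q"
proof -
  obtain a b where ab: "a \<in> {1, 2, 3}" "b \<in> {1, 2, 3}" "distinct [j, a, b]"
    by (rule that[of "if j = 1 then 2 else 1" "if j \<le> 2 then 3 else 2"]) auto
  have "Var (VY j) = det3 tkk_laplacian (VY j) (VY b) (VX 1) (VY j) (VX 1) (VY a)"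
    using ab by (simp add: det3_def algebra_simps)
  also have "\<dots> \<in> tkk_ideal3 m n q"
    using assms ab by (intro det3_mem_critical_ideal3) auto
  finally show ?thesis .
qed

lemma principal_minor_XYZ_mem:
  assumes "1 \<le> m" "1 \<le> n" "1 \<le> q"
  shows "Var (VX 1) * Var (VY 1) * Var (VZ 1) - Var (VX 1) - Var (VZ 1) \<in> tkk_ideal3 m n q"
proof -
  have "Var (VX 1) * Var (VY 1) * Var (VZ 1) - Var (VX 1) - Var (VZ 1) =
      det3 tkk_laplacian (VX 1) (VY 1) (VZ 1) (VX 1) (VY 1) (VZ 1)"
    by (simp add: det3_def algebra_simps)
  also have "\<dots> \<in> tkk_ideal3 m n q"
    using assms by (intro det3_mem_critical_ideal3) auto
  finally show ?thesis .
qed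

lemma tkk_ideal3_all_ge_2:
  assumes m: "2 \<le> m" and n: "2 \<le> n" and q: "2 \<le> q"
  shows "tkk_ideal3 m n q = ideal_gen
       ({2} \<union> {Var (VX i) + 1 | i. i \<in> {1..m}} \<union> {Var (VY j) | j. j \<in> {1..n}}
            \<union> {Var (VZ k) + 1 | k. k \<in> {1..q}})" (is "_ = ideal_gen ?G")
proof (rule antisym)
  let ?B = "\<lambda>i j. [[-1, -1, 0], [-1, 0, -1], [0, -1, -1]] ! i ! j"
  show "tkk_ideal3 m n q \<subseteq> ideal_gen ?G"
  proof (rule critical_ideal3_subset_by_blocks[OF ideal_ideal_gen _ vtx_part_range, where B = ?B])
    fix u v assume "u \<in> tkk_vertices m n q" "v \<in> tkk_vertices m n q"
    then show "tkk_laplacian u v - ?B (vtx_part u) (vtx_part v) \<in> ideal_gen ?G"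
      by (cases u; cases v) (auto intro!: ideal_gen_base)
  qed (simp add: det3_def ideal_gen_base)
  have "(2 :: vtx zpoly) = (Var (VX 1) * Var (VY 1) * Var (VZ 1) - Var (VX 1) - Var (VZ 1))
       + (1 + Var (VY 1) - Var (VY 1) * (Var (VZ 1) + 1)) * (Var (VX 1) + 1)
       + (1 + Var (VY 1)) * (Var (VZ 1) + 1) - Var (VY 1)"
    by (simp add: algebra_simps)
  also have "\<dots> \<in> tkk_ideal3 m n q"
    using m n q by (intro ideal_closed[OF ideal_critical_ideal3] principal_minor_XYZ_mem
        Var_VX_add_one_mem Var_VZ_add_one_mem Var_VY_mem) auto
  finally have "2 \<in> tkk_ideal3 m n q" .
  then show "ideal_gen ?G \<subseteq> tkk_ideal3 m n q"
    unfolding ideal_gen_subset_iff[OF ideal_critical_ideal3]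
    using m n q by (auto intro: Var_VX_add_one_mem Var_VZ_add_one_mem Var_VY_mem)
qed

lemma tkk_ideal3_n_eq_1:
  assumes m: "2 \<le> m" and n: "n = 1" and q: "2 \<le> q"
  shows "tkk_ideal3 m n q = ideal_gen
       ({Var (VX i) + 1 | i. i \<in> {1..m}} \<union> {Var (VY 1) + 2} \<union> {Var (VZ k) + 1 | k. k \<in> {1..q}})"
    (is "_ = ideal_gen ?G")
proof (rule antisym)
  let ?B = "\<lambda>i j. [[-1, -1, 0], [-1, -2, -1], [0, -1, -1]] ! i ! j"
  show "tkk_ideal3 m n q \<subseteq> ideal_gen ?G"
  proof (rule critical_ideal3_subset_by_blocks[OF ideal_ideal_gen _ vtx_part_range, where B = ?B])
    fix u v assume "u \<in> tkk_vertices m n q" "v \<in> tkk_vertices m n q"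
    then show "tkk_laplacian u v - ?B (vtx_part u) (vtx_part v) \<in> ideal_gen ?G"
      using n by (cases u; cases v) (auto intro!: ideal_gen_base)
  qed (simp add: det3_def)
  have "Var (VY 1) + 2 = (Var (VX 1) * Var (VY 1) * Var (VZ 1) - Var (VX 1) - Var (VZ 1))
       + (1 + Var (VY 1) - Var (VY 1) * (Var (VZ 1) + 1)) * (Var (VX 1) + 1)
       + (Var (VY 1) + 1) * (Var (VZ 1) + 1)"
    by (simp add: algebra_simps)
  also have "\<dots> \<in> tkk_ideal3 m n q"
    using m n q by (intro ideal_closed[OF ideal_critical_ideal3] principal_minor_XYZ_mem
        Var_VX_add_one_mem Var_VZ_add_one_mem) auto
  finally have "Var (VY 1) + 2 \<in> tkk_ideal3 m n q" .
  then show "ideal_gen ?G \<subseteq> tkk_ideal3 m n q"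
    unfolding ideal_gen_subset_iff[OF ideal_critical_ideal3]
    using m n q by (auto intro: Var_VX_add_one_mem Var_VZ_add_one_mem)
qed

lemma tkk_ideal3_q_eq_1:
  assumes m: "2 \<le> m" and n: "2 \<le> n" and q: "q = 1"
  shows "tkk_ideal3 m n q = ideal_gen
       ({Var (VX i) + 1 | i. i \<in> {1..m}} \<union> {Var (VY j) | j. j \<in> {1..n}} \<union> {Var (VZ 1) - 1})"
    (is "_ = ideal_gen ?G")
proof (rule antisym)
  let ?B = "\<lambda>i j. [[-1, -1, 0], [-1, 0, -1], [0, -1, 1]] ! i ! j"
  show "tkk_ideal3 m n q \<subseteq> ideal_gen ?G"
  proof (rule critical_ideal3_subset_by_blocks[OF ideal_ideal_gen _ vtx_part_range, where B = ?B])
    fix u v assume "u \<in> tkk_vertices m n q" "v \<in> tkk_vertices m n q"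
    then show "tkk_laplacian u v - ?B (vtx_part u) (vtx_part v) \<in> ideal_gen ?G"
      using q by (cases u; cases v) (auto intro!: ideal_gen_base)
  qed (simp add: det3_def)
  have "Var (VZ 1) - 1 = - (Var (VX 1) * Var (VY 1) * Var (VZ 1) - Var (VX 1) - Var (VZ 1))
       + (Var (VY 1) * Var (VZ 1) - 1) * (Var (VX 1) + 1) + (- Var (VZ 1)) * Var (VY 1)"
    by (simp add: algebra_simps)
  also have "\<dots> \<in> tkk_ideal3 m n q"
    using m n q by (intro ideal_closed[OF ideal_critical_ideal3] principal_minor_XYZ_mem
        Var_VX_add_one_mem Var_VY_mem) auto
  finally have "Var (VZ 1) - 1 \<in> tkk_ideal3 m n q" .
  then show "ideal_gen ?G \<subseteq> tkk_ideal3 m n q"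
    unfolding ideal_gen_subset_iff[OF ideal_critical_ideal3]
    using m n q by (auto intro: Var_VX_add_one_mem Var_VY_mem)
qed

lemma tkk_ideal3_n_eq_1_q_eq_1:
  assumes m: "2 \<le> m" and n: "n = 1" and q: "q = 1"
  shows "tkk_ideal3 m n q = ideal_gen
       ({Var (VX i) + 1 | i. i \<in> {1..m}} \<union> {Var (VZ 1) * Var (VY 1) + Var (VZ 1) - 1})"
    (is "_ = ideal_gen ?G")
proof (rule antisym)
  let ?B = "\<lambda>i j. [[-1, -1, 0], [-1, Var (VY 1), -1], [0, -1, Var (VZ 1)]] ! i ! j"
  show "tkk_ideal3 m n q \<subseteq> ideal_gen ?G"
  proof (rule critical_ideal3_subset_by_blocks[OF ideal_ideal_gen _ vtx_part_range, where B = ?B])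
    fix u v assume "u \<in> tkk_vertices m n q" "v \<in> tkk_vertices m n q"
    then show "tkk_laplacian u v - ?B (vtx_part u) (vtx_part v) \<in> ideal_gen ?G"
      using n q by (cases u; cases v) (auto intro!: ideal_gen_base)
  next
    have "det3 ?B 0 1 2 0 1 2 = - (Var (VZ 1) * Var (VY 1) + Var (VZ 1) - 1)"
      by (simp add: det3_def algebra_simps)
    then show "det3 ?B 0 1 2 0 1 2 \<in> ideal_gen ?G"
      by (simp only:) (intro ideal_closed(4)[OF ideal_ideal_gen] ideal_gen_base, simp)
  qed
  have "Var (VZ 1) * Var (VY 1) + Var (VZ 1) - 1 =
      - (Var (VX 1) * Var (VY 1) * Var (VZ 1) - Var (VX 1) - Var (VZ 1))
       + (Var (VY 1) * Var (VZ 1) - 1) * (Var (VX 1) + 1)"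
    by (simp add: algebra_simps)
  also have "\<dots> \<in> tkk_ideal3 m n q"
    using m n q by (intro ideal_closed[OF ideal_critical_ideal3] principal_minor_XYZ_mem
        Var_VX_add_one_mem) auto
  finally have "Var (VZ 1) * Var (VY 1) + Var (VZ 1) - 1 \<in> tkk_ideal3 m n q" .
  then show "ideal_gen ?G \<subseteq> tkk_ideal3 m n q"
    unfolding ideal_gen_subset_iff[OF ideal_critical_ideal3]
    using m n q by (auto intro: Var_VX_add_one_mem)
qed

lemma tkk_ideal3_q_eq_0:
  assumes m: "3 \<le> m" and n: "3 \<le> n" and q: "q = 0"
  shows "tkk_ideal3 m n q = ideal_gen
       ({Var (VX i) + 1 | i. i \<in> {1..m}} \<union> {Var (VY j) | j. j \<in> {1..n}})"
    (is "_ = ideal_gen ?G")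
proof (rule antisym)
  let ?B = "\<lambda>i j. [[-1, -1, 0], [-1, 0, 0], [0, 0, 0]] ! i ! j"
  show "tkk_ideal3 m n q \<subseteq> ideal_gen ?G"
  proof (rule critical_ideal3_subset_by_blocks[OF ideal_ideal_gen _ vtx_part_range, where B = ?B])
    fix u v assume "u \<in> tkk_vertices m n q" "v \<in> tkk_vertices m n q"
    then show "tkk_laplacian u v - ?B (vtx_part u) (vtx_part v) \<in> ideal_gen ?G"
      using q by (cases u; cases v) (auto intro!: ideal_gen_base)
  qed (simp add: det3_def)
  show "ideal_gen ?G \<subseteq> tkk_ideal3 m n q"
    unfolding ideal_gen_subset_iff[OF ideal_critical_ideal3]
    using m n by (auto intro: Var_VX_add_one_mem' Var_VY_mem')
qed

lemma tkk_ideal3_m_eq_2_q_eq_0: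
  assumes m: "m = 2" and n: "3 \<le> n" and q: "q = 0"
  shows "tkk_ideal3 m n q = ideal_gen ({Var (VX 1) + Var (VX 2) + 2} \<union> {Var (VY j) | j. j \<in> {1..n}})"
    (is "_ = ideal_gen ?G")
proof (rule antisym)
  let ?B = "\<lambda>i j. [[Var (VX 1), -1, -1], [-1, Var (VX 2), -1], [-1, -1, 0]] ! i ! j"
  let ?cls = "\<lambda>u. case u of VX i \<Rightarrow> i - 1 | _ \<Rightarrow> 2"
  show "tkk_ideal3 m n q \<subseteq> ideal_gen ?G"
  proof (rule critical_ideal3_subset_by_blocks[OF ideal_ideal_gen, where B = ?B and cls = ?cls])
    fix u v assume "u \<in> tkk_vertices m n q" "v \<in> tkk_vertices m n q"
    then show "tkk_laplacian u v - ?B (?cls u) (?cls v) \<in> ideal_gen ?G"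
      using m q by (cases u; cases v) (auto simp: le_Suc_eq numeral_2_eq_2 intro: ideal_gen_base)
  next
    show "?cls ` tkk_vertices m n q \<subseteq> {0, 1, 2}"
      using m q by (auto simp: le_Suc_eq numeral_2_eq_2 split: vtx.splits)
  next
    have "det3 ?B 0 1 2 0 1 2 = - (Var (VX 1) + Var (VX 2) + 2)"
      by (simp add: det3_def algebra_simps)
    then show "det3 ?B 0 1 2 0 1 2 \<in> ideal_gen ?G"
      by (simp only:) (intro ideal_closed(4)[OF ideal_ideal_gen] ideal_gen_base, simp)
  qed
  have "Var (VX 1) + Var (VX 2) + 2 =
      - det3 tkk_laplacian (VX 1) (VX 2) (VY 1) (VX 1) (VX 2) (VY 1) + (Var (VX 1) * Var (VX 2) - 1) * Var (VY 1)"
    by (simp add: det3_def algebra_simps)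
  also have "\<dots> \<in> tkk_ideal3 m n q"
    using m n q by (intro ideal_closed[OF ideal_critical_ideal3] det3_mem_critical_ideal3 Var_VY_mem') auto
  finally have "Var (VX 1) + Var (VX 2) + 2 \<in> tkk_ideal3 m n q" .
  then show "ideal_gen ?G \<subseteq> tkk_ideal3 m n q"
    unfolding ideal_gen_subset_iff[OF ideal_critical_ideal3]
    using m n by (auto intro: Var_VY_mem')
qed

lemma tkk_ideal3_n_eq_2_q_eq_0:
  assumes m: "3 \<le> m" and n: "n = 2" and q: "q = 0"
  shows "tkk_ideal3 m n q = ideal_gen
       ({Var (VX i) + 1 | i. i \<in> {1..m}} \<union> {Var (VY 1) * Var (VY 2) + Var (VY 1) + Var (VY 2)})"
    (is "_ = ideal_gen ?G")
proof (rule antisym)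
  let ?B = "\<lambda>i j. [[-1, -1, -1], [-1, Var (VY 1), 0], [-1, 0, Var (VY 2)]] ! i ! j"
  let ?cls = "\<lambda>u. case u of VY j \<Rightarrow> j | _ \<Rightarrow> 0"
  show "tkk_ideal3 m n q \<subseteq> ideal_gen ?G"
  proof (rule critical_ideal3_subset_by_blocks[OF ideal_ideal_gen, where B = ?B and cls = ?cls])
    fix u v assume "u \<in> tkk_vertices m n q" "v \<in> tkk_vertices m n q"
    then show "tkk_laplacian u v - ?B (?cls u) (?cls v) \<in> ideal_gen ?G"
      using n q by (cases u; cases v) (auto simp: le_Suc_eq numeral_2_eq_2 intro: ideal_gen_base)
  next
    show "?cls ` tkk_vertices m n q \<subseteq> {0, 1, 2}"
      using n q by (auto simp: le_Suc_eq numeral_2_eq_2 split: vtx.splits)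
  next
    have "det3 ?B 0 1 2 0 1 2 = - (Var (VY 1) * Var (VY 2) + Var (VY 1) + Var (VY 2))"
      by (simp add: det3_def algebra_simps)
    then show "det3 ?B 0 1 2 0 1 2 \<in> ideal_gen ?G"
      by (simp only:) (intro ideal_closed(4)[OF ideal_ideal_gen] ideal_gen_base, simp)
  qed
  have "Var (VY 1) * Var (VY 2) + Var (VY 1) + Var (VY 2) =
      - det3 tkk_laplacian (VX 1) (VY 1) (VY 2) (VX 1) (VY 1) (VY 2) + (Var (VY 1) * Var (VY 2)) * (Var (VX 1) + 1)"
    by (simp add: det3_def algebra_simps)
  also have "\<dots> \<in> tkk_ideal3 m n q"
    using m n q by (intro ideal_closed[OF ideal_critical_ideal3] det3_mem_critical_ideal3 Var_VX_add_one_mem') auto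
  finally have "Var (VY 1) * Var (VY 2) + Var (VY 1) + Var (VY 2) \<in> tkk_ideal3 m n q" .
  then show "ideal_gen ?G \<subseteq> tkk_ideal3 m n q"
    unfolding ideal_gen_subset_iff[OF ideal_critical_ideal3]
    using m n by (auto intro: Var_VX_add_one_mem')
qed

lemma tkk_laplacian_2_2_0_minors_mem:
  assumes "(a, b, c) \<in> T" "(d, e, f) \<in> T"
    and T: "T = {(VX 1, VX 2, VY 1), (VX 1, VX 2, VY 2), (VX 1, VY 1, VY 2), (VX 2, VY 1, VY 2)}"
  shows "det3 tkk_laplacian a b c d e f \<in> ideal_gen
       {Var (VX 1) + Var (VX 2) + 2, Var (VX 2) * Var (VY 1) + Var (VY 1),
        Var (VX 2) * Var (VY 2) + Var (VY 2), Var (VY 1) * Var (VY 2) + Var (VY 1) + Var (VY 2)}"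
    (is "_ \<in> ideal_gen ?G")
proof -
  let ?L = tkk_laplacian
  let ?x1 = "Var (VX 1)" and ?x2 = "Var (VX 2)" and ?y1 = "Var (VY 1)" and ?y2 = "Var (VY 2)"
  define g1 g2 g3 g4 where "g1 = ?x1 + ?x2 + 2" and "g2 = ?x2 * ?y1 + ?y1" and "g3 = ?x2 * ?y2 + ?y2"
    and "g4 = ?y1 * ?y2 + ?y1 + ?y2"
  note g_defs = g1_def g2_def g3_def g4_def
  have gens: "g1 \<in> ideal_gen ?G" "g2 \<in> ideal_gen ?G" "g3 \<in> ideal_gen ?G" "g4 \<in> ideal_gen ?G"
    unfolding g_defs by (simp_all add: ideal_gen_base)
  have minors:
    "det3 ?L (VX 1) (VX 2) (VY 1) (VX 1) (VX 2) (VY 1) = (?x2 * ?y1 - 1) * g1 - (?x2 + 1) * g2"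
    "det3 ?L (VX 1) (VX 2) (VY 1) (VX 1) (VX 2) (VY 2) = - g1"
    "det3 ?L (VX 1) (VX 2) (VY 1) (VX 1) (VY 1) (VY 2) = ?y1 * g1 - g2"
    "det3 ?L (VX 1) (VX 2) (VY 1) (VX 2) (VY 1) (VY 2) = - g2"
    "det3 ?L (VX 1) (VX 2) (VY 2) (VX 1) (VX 2) (VY 2) = (?x2 * ?y2 - 1) * g1 - (?x2 + 1) * g3"
    "det3 ?L (VX 1) (VX 2) (VY 2) (VX 1) (VY 1) (VY 2) = g3 - ?y2 * g1"
    "det3 ?L (VX 1) (VX 2) (VY 2) (VX 2) (VY 1) (VY 2) = g3"
    "det3 ?L (VX 1) (VY 1) (VY 2) (VX 1) (VY 1) (VY 2) = (?y1 * ?y2) * g1 - ?y2 * g2 - g4"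
    "det3 ?L (VX 1) (VY 1) (VY 2) (VX 2) (VY 1) (VY 2) = - g4"
    "det3 ?L (VX 2) (VY 1) (VY 2) (VX 2) (VY 1) (VY 2) = ?y2 * g2 - g4"
    unfolding g_defs by (simp_all add: det3_def algebra_simps)
  have upper:
    "det3 ?L (VX 1) (VX 2) (VY 1) (VX 1) (VX 2) (VY 1) \<in> ideal_gen ?G"
    "det3 ?L (VX 1) (VX 2) (VY 1) (VX 1) (VX 2) (VY 2) \<in> ideal_gen ?G"
    "det3 ?L (VX 1) (VX 2) (VY 1) (VX 1) (VY 1) (VY 2) \<in> ideal_gen ?G"
    "det3 ?L (VX 1) (VX 2) (VY 1) (VX 2) (VY 1) (VY 2) \<in> ideal_gen ?G"
    "det3 ?L (VX 1) (VX 2) (VY 2) (VX 1) (VX 2) (VY 2) \<in> ideal_gen ?G"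
    "det3 ?L (VX 1) (VX 2) (VY 2) (VX 1) (VY 1) (VY 2) \<in> ideal_gen ?G"
    "det3 ?L (VX 1) (VX 2) (VY 2) (VX 2) (VY 1) (VY 2) \<in> ideal_gen ?G"
    "det3 ?L (VX 1) (VY 1) (VY 2) (VX 1) (VY 1) (VY 2) \<in> ideal_gen ?G"
    "det3 ?L (VX 1) (VY 1) (VY 2) (VX 2) (VY 1) (VY 2) \<in> ideal_gen ?G"
    "det3 ?L (VX 2) (VY 1) (VY 2) (VX 2) (VY 1) (VY 2) \<in> ideal_gen ?G"
    unfolding minors by (intro ideal_closed[OF ideal_ideal_gen] gens)+
  show ?thesis
    using assms upper det3_symmetric[of ?L, OF tkk_laplacian_sym] by auto
qed

lemma tkk_ideal3_m_eq_2_n_eq_2_q_eq_0: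
  assumes m: "m = 2" and n: "n = 2" and q: "q = 0"
  shows "tkk_ideal3 m n q = ideal_gen
       {Var (VX 1) + Var (VX 2) + 2, Var (VX 2) * Var (VY 1) + Var (VY 1),
        Var (VX 2) * Var (VY 2) + Var (VY 2), Var (VY 1) * Var (VY 2) + Var (VY 1) + Var (VY 2)}"
    (is "_ = ideal_gen ?G")
proof (rule antisym)
  let ?T = "{(VX 1, VX 2, VY 1), (VX 1, VX 2, VY 2), (VX 1, VY 1, VY 2), (VX 2, VY 1, VY 2)}"
  have V: "tkk_vertices m n q = {VX 1, VX 2, VY 1, VY 2}"
    using m n q by (auto simp: tkk_vertices_def)
  have "det3 tkk_laplacian a b c d e f \<in> ideal_gen ?G"
    if "(a, b, c) \<in> ?T" "(d, e, f) \<in> ?T" for a b c d e f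
    using that by (rule tkk_laplacian_2_2_0_minors_mem[OF _ _ refl])
  then show "tkk_ideal3 m n q \<subseteq> ideal_gen ?G"
    by (intro critical_ideal3_subset_by_triples[OF ideal_ideal_gen, where T = ?T]) (auto simp: V)
  let ?L = tkk_laplacian
  have "Var (VX 1) + Var (VX 2) + 2 = det3 ?L (VX 2) (VX 1) (VY 1) (VX 1) (VX 2) (VY 2)"
    and "Var (VX 2) * Var (VY 1) + Var (VY 1) = det3 ?L (VX 2) (VX 1) (VY 1) (VX 2) (VY 1) (VY 2)"
    and "Var (VX 2) * Var (VY 2) + Var (VY 2) = det3 ?L (VX 1) (VX 2) (VY 2) (VX 2) (VY 1) (VY 2)"
    and "Var (VY 1) * Var (VY 2) + Var (VY 1) + Var (VY 2) =
      det3 ?L (VY 1) (VX 1) (VY 2) (VX 2) (VY 1) (VY 2)"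
    by (simp_all add: det3_def algebra_simps)
  then show "ideal_gen ?G \<subseteq> tkk_ideal3 m n q"
    unfolding ideal_gen_subset_iff[OF ideal_critical_ideal3]
    using m n q by (auto intro!: det3_mem_critical_ideal3)
qed

theorem theorem4p5:
  fixes m n q :: nat
  assumes "m \<ge> q" and "m + n + q \<ge> 4"
    and "graph_connected (tkk_vertices m n q) tkk_adj"
    and "\<not> graph_complete (tkk_vertices m n q) tkk_adj"
    and "\<not> graph_complete_bipartite (tkk_vertices m n q) tkk_adj"
  shows
   "(m \<ge> 2 \<and> n \<ge> 2 \<and> q \<ge> 2 \<longrightarrow> critical_ideal3 (tkk_vertices m n q) tkk_mult = ideal_gen
       ({2} \<union> {Var (VX i) + 1 | i. i \<in> {1..m}} \<union> {Var (VY j) | j. j \<in> {1..n}}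
            \<union> {Var (VZ k) + 1 | k. k \<in> {1..q}})) \<and>
    (m \<ge> 2 \<and> n = 1 \<and> q \<ge> 2 \<longrightarrow> critical_ideal3 (tkk_vertices m n q) tkk_mult = ideal_gen
       ({Var (VX i) + 1 | i. i \<in> {1..m}} \<union> {Var (VY 1) + 2}
            \<union> {Var (VZ k) + 1 | k. k \<in> {1..q}})) \<and>
    (m \<ge> 2 \<and> n \<ge> 2 \<and> q = 1 \<longrightarrow> critical_ideal3 (tkk_vertices m n q) tkk_mult = ideal_gen
       ({Var (VX i) + 1 | i. i \<in> {1..m}} \<union> {Var (VY j) | j. j \<in> {1..n}} \<union> {Var (VZ 1) - 1})) \<and>
    (m = 1 \<and> n \<ge> 3 \<and> q = 1 \<longrightarrow> critical_ideal3 (tkk_vertices m n q) tkk_mult = ideal_gen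
       ({Var (VX 1) + Var (VZ 1)} \<union> {Var (VY j) | j. j \<in> {1..n}})) \<and>
    (m = 1 \<and> n = 2 \<and> q = 1 \<longrightarrow> critical_ideal3 (tkk_vertices m n q) tkk_mult = ideal_gen
       {Var (VX 1) + Var (VZ 1), Var (VY 1) + Var (VY 2), Var (VY 2) * Var (VZ 1)}) \<and>
    (m \<ge> 2 \<and> n = 1 \<and> q = 1 \<longrightarrow> critical_ideal3 (tkk_vertices m n q) tkk_mult = ideal_gen
       ({Var (VX i) + 1 | i. i \<in> {1..m}} \<union> {Var (VZ 1) * Var (VY 1) + Var (VZ 1) - 1})) \<and>
    (m \<ge> 3 \<and> n \<ge> 3 \<and> q = 0 \<longrightarrow> critical_ideal3 (tkk_vertices m n q) tkk_mult = ideal_gen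
       ({Var (VX i) + 1 | i. i \<in> {1..m}} \<union> {Var (VY j) | j. j \<in> {1..n}})) \<and>
    (m = 2 \<and> n \<ge> 3 \<and> q = 0 \<longrightarrow> critical_ideal3 (tkk_vertices m n q) tkk_mult = ideal_gen
       ({Var (VX 1) + Var (VX 2) + 2} \<union> {Var (VY j) | j. j \<in> {1..n}})) \<and>
    (m \<ge> 3 \<and> n = 2 \<and> q = 0 \<longrightarrow> critical_ideal3 (tkk_vertices m n q) tkk_mult = ideal_gen
       ({Var (VX i) + 1 | i. i \<in> {1..m}} \<union> {Var (VY 1) * Var (VY 2) + Var (VY 1) + Var (VY 2)})) \<and>
    (m = 2 \<and> n = 2 \<and> q = 0 \<longrightarrow> critical_ideal3 (tkk_vertices m n q) tkk_mult = ideal_gen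
       {Var (VX 1) + Var (VX 2) + 2, Var (VX 2) * Var (VY 1) + Var (VY 1),
        Var (VX 2) * Var (VY 2) + Var (VY 2),
        Var (VY 1) * Var (VY 2) + Var (VY 1) + Var (VY 2)})"
proof -
  \<comment> \<open>For \<open>m = q = 1\<close> the graph is complete bipartite, so those two cases hold vacuously.\<close>
  have not_K2n: "\<not> (m = 1 \<and> q = 1 \<and> 1 \<le> n)"
    using assms(5) tkk_complete_bipartite by blast
  show ?thesis
    using not_K2n
    by (intro conjI impI; elim conjE)
      (simp_all add: tkk_ideal3_all_ge_2 tkk_ideal3_n_eq_1 tkk_ideal3_q_eq_1 tkk_ideal3_n_eq_1_q_eq_1
        tkk_ideal3_q_eq_0 tkk_ideal3_m_eq_2_q_eq_0 tkk_ideal3_n_eq_2_q_eq_0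
        tkk_ideal3_m_eq_2_n_eq_2_q_eq_0)
qed

end
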